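(* Fix $K\ge1$, points $\mathbf{w}_1,\dots,\mathbf{w}_K\in\mathbb{R}^2$ and constants $H>0$, $\rho_0>0$, $\sigma^2>0$, $r^*>0$, $P_c\ge0$, $E_1,\dots,E_K>0$, $\tilde P_1,\dots,\tilde P_K>0$. For $\mathbf{q}\in\mathbb{R}^2$ write $d_k=\sqrt{\|\mathbf{q}-\mathbf{w}_k\|^2+H^2}$ and $h_k=\rho_0/d_k^2$. Problem (P1): minimize $\zeta$ over $(\zeta,\mathbf{q},\mathbf{p},\pi)$ with $\zeta\in\mathbb{R}$, $\mathbf q\in\mathbb{R}^2$, $\mathbf p\in\mathbb{R}^K$, $\pi$ a permutation of $\{1,\dots,K\}$, subject to, for all $m$: $p_{\pi(m)}+P_c\le\zeta E_{\pi(m)}$; $0\le p_{\pi(m)}\le\tilde P_{\pi(m)}$; $\log_2\big(1+\frac{p_{\pi(m)}h_{\pi(m)}}{\sum_{n=m+1}^Kp_{\pi(n)}h_{\pi(n)}+\sigma^2}\big)\ge r^*$; and $d_{\pi(1)}\le d_{\pi(2)}\le\dots\le d_{\pi(K)}$. Problem (P2): minimize $\zeta$ over $(\zeta,\mathbf{q},\mathbf{p},\boldsymbol\alpha)$ with $\boldsymbol\alpha=(\alpha_{k,j})_{k,j=1}^K$, subject to, for all $k$: $p_k+P_c\le\zeta E_k$; $0\le p_k\le\tilde P_k$; $\log_2\big(1+\frac{p_kh_k}{\sum_{j\ne k}\alpha_{k,j}p_jh_j+\sigma^2}\big)\ge r^*$; for all $k\ne j$: $\alpha_{k,j}=0$ if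 $d_k>d_j$, $\alpha_{k,j}=1$ if $d_k<d_j$, $\alpha_{k,j}\in\{0,1\}$ if $d_k=d_j$; $\alpha_{k,k}=0$; $\alpha_{k,j}+\alpha_{j,k}=1$ for $k\ne j$; $\alpha_{k,j}+\alpha_{j,i}-1\le\alpha_{k,i}$ for all $k,j,i$. Let $(\zeta,\mathbf{q},\mathbf{p},\boldsymbol\alpha)$ be feasible for (P2), and let $f(k)=K-\sum_{j=1}^K\alpha_{k,j}$. Then $f$ is a permutation of $\{1,\dots,K\}$, and setting $\pi'=f^{-1}$ and $\mathbf p'$ with $p'_{\pi'(m)}=p_{f^{-1}(m)}$ for all $m$, the tuple $(\zeta,\mathbf q,\mathbf p',\pi')$ is feasible for (P1); moreover the objective value of (P1) at $(\mathbf q,\mathbf p',\pi')$ equals that of (P2) at $(\mathbf q,\mathbf p,\boldsymbol\alpha)$ (both equal the least admissible $\zeta$, namely $\max_k (p_k+P_c)/E_k$).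
   Context: (P1) models maximizing the minimum device lifetime $E_k/(p_k+P_c)$ (via $\zeta=1/\text{lifetime}$) in uplink NOMA to a UAV with permutation decoding order $\pi$ ($\pi(m)=k$: device $k$ is decoded $m$-th); (P2) is the same with binary decoding-order variables $\alpha_{k,j}$ ($\alpha_{k,j}=1$: device $k$ decoded before device $j$). $\tilde P_k$ is the allowable transmit power of device $k$. *)

theory Defs
  imports "HOL-Analysis.Analysis"
begin

text \<open>Devices are indexed by 1..K. Distance from UAV position q (at altitude H) to device k.\<close>
definition dist_dev :: "real \<Rightarrow> (nat \<Rightarrow> real^2) \<Rightarrow> real^2 \<Rightarrow> nat \<Rightarrow> real" where
  "dist_dev H w q k = sqrt ((norm (q - w k))^2 + H^2)"

definition gain :: "real \<Rightarrow> real \<Rightarrow> (nat \<Rightarrow> real^2) \<Rightarrow> real^2 \<Rightarrow> nat \<Rightarrow> real" where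
  "gain rho0 H w q k = rho0 / (dist_dev H w q k)^2"

text \<open>Feasibility for (P1): ord m = k means device k is decoded m-th.\<close>
definition feasible_P1 ::
  "nat \<Rightarrow> real \<Rightarrow> real \<Rightarrow> real \<Rightarrow> real \<Rightarrow> real \<Rightarrow> (nat \<Rightarrow> real) \<Rightarrow> (nat \<Rightarrow> real)
   \<Rightarrow> (nat \<Rightarrow> real^2) \<Rightarrow> real \<Rightarrow> real^2 \<Rightarrow> (nat \<Rightarrow> real) \<Rightarrow> (nat \<Rightarrow> nat) \<Rightarrow> bool" where
  "feasible_P1 K H rho0 sigma2 rstar Pc E Pt w zeta q p ord \<longleftrightarrow>
     bij_betw ord {1..K} {1..K} \<and>
     (\<forall>m\<in>{1..K}.
        p (ord m) + Pc \<le> zeta * E (ord m) \<and>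
        0 \<le> p (ord m) \<and> p (ord m) \<le> Pt (ord m) \<and>
        log 2 (1 + p (ord m) * gain rho0 H w q (ord m) /
           ((\<Sum>n\<in>{m+1..K}. p (ord n) * gain rho0 H w q (ord n)) + sigma2)) \<ge> rstar) \<and>
     (\<forall>m\<in>{1..<K}. dist_dev H w q (ord m) \<le> dist_dev H w q (ord (m+1)))"

text \<open>Feasibility for (P2): alpha k j = 1 means device k is decoded before device j.\<close>
definition feasible_P2 ::
  "nat \<Rightarrow> real \<Rightarrow> real \<Rightarrow> real \<Rightarrow> real \<Rightarrow> real \<Rightarrow> (nat \<Rightarrow> real) \<Rightarrow> (nat \<Rightarrow> real)
   \<Rightarrow> (nat \<Rightarrow> real^2) \<Rightarrow> real \<Rightarrow> real^2 \<Rightarrow> (nat \<Rightarrow> real) \<Rightarrow> (nat \<Rightarrow> nat \<Rightarrow> int) \<Rightarrow> bool" where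
  "feasible_P2 K H rho0 sigma2 rstar Pc E Pt w zeta q p alpha \<longleftrightarrow>
     (\<forall>k\<in>{1..K}.
        p k + Pc \<le> zeta * E k \<and>
        0 \<le> p k \<and> p k \<le> Pt k \<and>
        log 2 (1 + p k * gain rho0 H w q k /
           ((\<Sum>j\<in>{1..K} - {k}. of_int (alpha k j) * p j * gain rho0 H w q j) + sigma2)) \<ge> rstar) \<and>
     (\<forall>k\<in>{1..K}. \<forall>j\<in>{1..K}. k \<noteq> j \<longrightarrow>
        (dist_dev H w q k > dist_dev H w q j \<longrightarrow> alpha k j = 0) \<and>
        (dist_dev H w q k < dist_dev H w q j \<longrightarrow> alpha k j = 1) \<and>
        (dist_dev H w q k = dist_dev H w q j \<longrightarrow> alpha k j \<in> {0, 1})) \<and>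
     (\<forall>k\<in>{1..K}. alpha k k = 0) \<and>
     (\<forall>k\<in>{1..K}. \<forall>j\<in>{1..K}. k \<noteq> j \<longrightarrow> alpha k j + alpha j k = 1) \<and>
     (\<forall>k\<in>{1..K}. \<forall>j\<in>{1..K}. \<forall>i\<in>{1..K}. alpha k j + alpha j i - 1 \<le> alpha k i)"

definition least_elem :: "real set \<Rightarrow> real \<Rightarrow> bool" where
  "least_elem S x \<longleftrightarrow> x \<in> S \<and> (\<forall>y\<in>S. x \<le> y)"

end

theory Submission
  imports Defs
begin

text \<open>The matrix \<open>\<alpha>\<close> of a feasible point of (P2) is the indicator of a strict total order
  on the devices (\<open>\<alpha>\<^sub>k\<^sub>j = 1\<close> iff \<open>k\<close> is decoded before \<open>j\<close>), and \<open>K - \<Sum>\<^sub>j \<alpha>\<^sub>k\<^sub>j\<close> is the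
  position of \<open>k\<close> in that order. Enumerating the devices by position, the interference
  \<open>\<Sum>\<^sub>j \<alpha>\<^sub>k\<^sub>j p\<^sub>j h\<^sub>j\<close> seen by the \<open>m\<close>-th device is exactly the sum over the devices at positions
  after \<open>m\<close>, and the distance constraints on \<open>\<alpha>\<close> force consecutive devices to be ordered by
  distance. In both problems \<open>\<zeta>\<close> enters only
  through \<open>p\<^sub>k + P\<^sub>c \<le> \<zeta> E\<^sub>k\<close>, so the least admissible \<open>\<zeta>\<close> is \<open>max\<^sub>k (p\<^sub>k + P\<^sub>c) / E\<^sub>k\<close> for both.\<close>

locale finite_strict_total_order =
  fixes A :: "'a set" and R :: "'a \<Rightarrow> 'a \<Rightarrow> bool"
  assumes finite_A: "finite A"
    and irreflp_on: "irreflp_on A R"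
    and transp_on: "transp_on A R"
    and totalp_on: "totalp_on A R"
begin

definition above :: "'a \<Rightarrow> 'a set" where
  "above k = {j \<in> A. R k j}"

definition rank :: "'a \<Rightarrow> nat" where
  "rank k = card A - card (above k)"

lemma card_above_less_card: "k \<in> A \<Longrightarrow> card (above k) < card A"
proof -
  assume k: "k \<in> A"
  have "above k \<subseteq> A - {k}"
    using irreflp_onD[OF irreflp_on k] by (auto simp: above_def)
  then have "card (above k) \<le> card (A - {k})"
    using finite_A by (intro card_mono) auto
  also have "\<dots> < card A"
    using finite_A k by (rule card_Diff1_less)
  finally show ?thesis .
qed

lemma card_above_strict_antimono:
  assumes k: "k \<in> A" and j: "j \<in> A" and "R k j"
  shows "card (above j) < card (above k)"
proof -
  have "above j \<subseteq> above k - {j}"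
    using transp_onD[OF transp_on k j] irreflp_onD[OF irreflp_on j] \<open>R k j\<close>
    by (auto simp: above_def)
  moreover have "j \<in> above k"
    using j \<open>R k j\<close> by (simp add: above_def)
  moreover have "finite (above k)"
    using finite_A by (simp add: above_def)
  ultimately show ?thesis
    by (meson card_Diff1_less card_mono finite_Diff order_le_less_trans)
qed

lemma rank_less_iff: "k \<in> A \<Longrightarrow> j \<in> A \<Longrightarrow> rank k < rank j \<longleftrightarrow> R k j"
  using card_above_strict_antimono card_above_less_card totalp_onD[OF totalp_on]
  unfolding rank_def by (metis diff_less_mono2 less_asym' less_irrefl)

lemma bij_betw_rank: "bij_betw rank A {1..card A}"
proof -
  have "inj_on rank A"
    by (rule inj_onI) (metis rank_less_iff totalp_onD[OF totalp_on] less_irrefl)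
  moreover have "rank k \<in> {1..card A}" if "k \<in> A" for k
    using card_above_less_card[OF that] by (simp add: rank_def)
  then have "rank ` A \<subseteq> {1..card A}"
    by blast
  moreover have "card (rank ` A) = card {1..card A}"
    using \<open>inj_on rank A\<close> by (simp add: card_image)
  ultimately show ?thesis
    by (simp add: bij_betw_def card_subset_eq)
qed

end

lemma sum_zero_one_eq_card:
  fixes a :: "'a \<Rightarrow> int"
  assumes "finite B" and "\<forall>j\<in>B. a j \<in> {0, 1}"
  shows "(\<Sum>j\<in>B. a j) = int (card {j \<in> B. a j = 1})"
proof -
  have "(\<Sum>j\<in>B. a j) = (\<Sum>j\<in>B. if a j = 1 then 1 else 0)"
    using assms(2) by (intro sum.cong) auto
  also have "\<dots> = int (card {j \<in> B. a j = 1})"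
    using assms(1) by (simp add: sum.inter_filter[symmetric])
  finally show ?thesis .
qed

lemma least_elem_Max_ratio:
  fixes c E :: "'a \<Rightarrow> real"
  assumes "finite A" and "A \<noteq> {}" and "\<forall>k\<in>A. E k > 0"
  shows "least_elem {z. \<forall>k\<in>A. c k \<le> z * E k} (Max ((\<lambda>k. c k / E k) ` A))"
proof -
  have "{z. \<forall>k\<in>A. c k \<le> z * E k} = {z. Max ((\<lambda>k. c k / E k) ` A) \<le> z}"
    using assms by (auto simp: pos_divide_le_eq)
  then show ?thesis
    by (simp add: least_elem_def)
qed

lemma
  assumes feas: "feasible_P2 K H rho0 sigma2 rstar Pc E Pt w zeta q p alpha"
    and k: "k \<in> {1..K}"
  shows feasible_P2_alpha_diag: "alpha k k = 0"
    and feasible_P2_alpha_antisym: "j \<in> {1..K} \<Longrightarrow> k \<noteq> j \<Longrightarrow> alpha k j + alpha j k = 1"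
    and feasible_P2_alpha_trans:
      "j \<in> {1..K} \<Longrightarrow> i \<in> {1..K} \<Longrightarrow> alpha k j + alpha j i - 1 \<le> alpha k i"
    and feasible_P2_alpha_farther:
      "j \<in> {1..K} \<Longrightarrow> k \<noteq> j \<Longrightarrow> dist_dev H w q j < dist_dev H w q k \<Longrightarrow> alpha k j = 0"
    and feasible_P2_alpha_zero_one: "j \<in> {1..K} \<Longrightarrow> alpha k j \<in> {0, 1}"
proof -
  note F = feas[unfolded feasible_P2_def]
  show diag: "alpha k k = 0"
    using F k by simp
  fix j assume j: "j \<in> {1..K}"
  show "k \<noteq> j \<Longrightarrow> alpha k j + alpha j k = 1"
    using F k j by simp
  show "i \<in> {1..K} \<Longrightarrow> alpha k j + alpha j i - 1 \<le> alpha k i" for i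
    using F k j by simp
  show "k \<noteq> j \<Longrightarrow> dist_dev H w q j < dist_dev H w q k \<Longrightarrow> alpha k j = 0"
    using F k j by simp
  show "alpha k j \<in> {0, 1}"
  proof (cases "k = j")
    case False
    then have "(dist_dev H w q k > dist_dev H w q j \<longrightarrow> alpha k j = 0) \<and>
        (dist_dev H w q k < dist_dev H w q j \<longrightarrow> alpha k j = 1) \<and>
        (dist_dev H w q k = dist_dev H w q j \<longrightarrow> alpha k j \<in> {0, 1})"
      using F k j by simp
    then show ?thesis
      by (cases rule: linorder_cases[of "dist_dev H w q k" "dist_dev H w q j"]) auto
  qed (use diag in auto)
qed

lemma finite_strict_total_order_feasible_P2:
  assumes feas: "feasible_P2 K H rho0 sigma2 rstar Pc E Pt w zeta q p alpha"
  shows "finite_strict_total_order {1..K} (\<lambda>k j. alpha k j = 1)"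
proof
  show "irreflp_on {1..K} (\<lambda>k j. alpha k j = 1)"
    using feasible_P2_alpha_diag[OF feas] by (simp add: irreflp_on_def)
  show "transp_on {1..K} (\<lambda>k j. alpha k j = 1)"
  proof (rule transp_onI)
    fix k j i assume k: "k \<in> {1..K}" and j: "j \<in> {1..K}" and i: "i \<in> {1..K}"
      and "alpha k j = 1" "alpha j i = 1"
    then have "1 \<le> alpha k i"
      using feasible_P2_alpha_trans[OF feas k j i] by simp
    then show "alpha k i = 1"
      using feasible_P2_alpha_zero_one[OF feas k i] by auto
  qed
  show "totalp_on {1..K} (\<lambda>k j. alpha k j = 1)"
  proof (rule totalp_onI)
    fix k j assume k: "k \<in> {1..K}" and j: "j \<in> {1..K}" and "k \<noteq> j"
    then show "alpha k j = 1 \<or> alpha j k = 1"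
      using feasible_P2_alpha_antisym[OF feas k j] feasible_P2_alpha_zero_one[OF feas k j] by auto
  qed
qed simp

lemma sum_alpha_eq_sum_later_positions:
  fixes G :: "nat \<Rightarrow> 'b::comm_ring_1"
  assumes bij: "bij_betw ord {1..K} {1..K}"
    and before_iff: "\<And>m n. m \<in> {1..K} \<Longrightarrow> n \<in> {1..K} \<Longrightarrow> alpha (ord m) (ord n) = 1 \<longleftrightarrow> m < n"
    and antisym: "\<And>k j. k \<in> {1..K} \<Longrightarrow> j \<in> {1..K} \<Longrightarrow> k \<noteq> j \<Longrightarrow> alpha k j + alpha j k = 1"
    and m: "m \<in> {1..K}"
  shows "(\<Sum>j\<in>{1..K} - {ord m}. of_int (alpha (ord m) j) * G j) = (\<Sum>n\<in>{m+1..K}. G (ord n))"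
proof -
  have "bij_betw ord ({1..K} - {m}) ({1..K} - {ord m})"
    using bij m bij_betw_apply[OF bij m] by (intro bij_betw_DiffI) auto
  then have "(\<Sum>j\<in>{1..K} - {ord m}. of_int (alpha (ord m) j) * G j)
      = (\<Sum>n\<in>{1..K} - {m}. of_int (alpha (ord m) (ord n)) * G (ord n))"
    by (rule sum.reindex_bij_betw[symmetric])
  also have "\<dots> = (\<Sum>n\<in>{1..K} - {m}. if m < n then G (ord n) else 0)"
  proof (rule sum.cong)
    fix n assume n: "n \<in> {1..K} - {m}"
    then have "ord m \<noteq> ord n"
      using inj_onD[OF bij_betw_imp_inj_on[OF bij]] m by blast
    then have "alpha (ord m) (ord n) + alpha (ord n) (ord m) = 1"
      using antisym bij_betw_apply[OF bij] m n by simp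
    moreover have "alpha (ord m) (ord n) = 1 \<longleftrightarrow> m < n" "alpha (ord n) (ord m) = 1 \<longleftrightarrow> n < m"
      using before_iff m n by auto
    ultimately show "of_int (alpha (ord m) (ord n)) * G (ord n) = (if m < n then G (ord n) else 0)"
      using n by auto
  qed simp
  also have "\<dots> = (\<Sum>n\<in>{m+1..K}. G (ord n))"
    by (simp add: sum.inter_filter[symmetric]) (intro sum.cong; auto)
  finally show ?thesis .
qed

lemma feasible_P1_if_feasible_P2:
  assumes feas: "feasible_P2 K H rho0 sigma2 rstar Pc E Pt w zeta q p alpha"
    and bij: "bij_betw ord {1..K} {1..K}"
    and before_iff: "\<And>m n. m \<in> {1..K} \<Longrightarrow> n \<in> {1..K} \<Longrightarrow> alpha (ord m) (ord n) = 1 \<longleftrightarrow> m < n"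
  shows "feasible_P1 K H rho0 sigma2 rstar Pc E Pt w zeta q p ord"
proof -
  have ord_in: "ord m \<in> {1..K}" if "m \<in> {1..K}" for m
    using bij_betw_apply[OF bij that] .
  have devices: "\<forall>m\<in>{1..K}. p (ord m) + Pc \<le> zeta * E (ord m) \<and>
      0 \<le> p (ord m) \<and> p (ord m) \<le> Pt (ord m) \<and>
      rstar \<le> log 2 (1 + p (ord m) * gain rho0 H w q (ord m) /
        ((\<Sum>n\<in>{m+1..K}. p (ord n) * gain rho0 H w q (ord n)) + sigma2))"
  proof
    fix m assume m: "m \<in> {1..K}"
    have "(\<Sum>j\<in>{1..K} - {ord m}. of_int (alpha (ord m) j) * p j * gain rho0 H w q j)
        = (\<Sum>n\<in>{m+1..K}. p (ord n) * gain rho0 H w q (ord n))"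
      using sum_alpha_eq_sum_later_positions[OF bij before_iff feasible_P2_alpha_antisym[OF feas] m,
          of "\<lambda>j. p j * gain rho0 H w q j"]
      by (simp add: mult.assoc)
    then show "p (ord m) + Pc \<le> zeta * E (ord m) \<and> 0 \<le> p (ord m) \<and> p (ord m) \<le> Pt (ord m) \<and>
        rstar \<le> log 2 (1 + p (ord m) * gain rho0 H w q (ord m) /
          ((\<Sum>n\<in>{m+1..K}. p (ord n) * gain rho0 H w q (ord n)) + sigma2))"
      using feas[unfolded feasible_P2_def, THEN conjunct1, rule_format, OF ord_in[OF m]] by simp
  qed
  have sorted: "\<forall>m\<in>{1..<K}. dist_dev H w q (ord m) \<le> dist_dev H w q (ord (m+1))"
  proof
    fix m assume "m \<in> {1..<K}"
    then have m: "m \<in> {1..K}" "m + 1 \<in> {1..K}"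
      by auto
    then have "alpha (ord m) (ord (m+1)) = 1"
      using before_iff by simp
    then show "dist_dev H w q (ord m) \<le> dist_dev H w q (ord (m+1))"
      using feasible_P2_alpha_farther[OF feas ord_in[OF m(1)] ord_in[OF m(2)]] by fastforce
  qed
  show ?thesis
    unfolding feasible_P1_def using bij devices sorted by (intro conjI)
qed

definition decoding_position :: "nat \<Rightarrow> (nat \<Rightarrow> nat \<Rightarrow> int) \<Rightarrow> nat \<Rightarrow> nat" where
  "decoding_position K alpha k = nat (int K - (\<Sum>j\<in>{1..K}. alpha k j))"

lemma
  assumes feas: "feasible_P2 K H rho0 sigma2 rstar Pc E Pt w zeta q p alpha"
  shows bij_betw_decoding_position: "bij_betw (decoding_position K alpha) {1..K} {1..K}"
    and feasible_P1_decoding_order: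
      "feasible_P1 K H rho0 sigma2 rstar Pc E Pt w zeta q p (inv_into {1..K} (decoding_position K alpha))"
proof -
  interpret finite_strict_total_order "{1..K}" "\<lambda>k j. alpha k j = 1"
    using feas by (rule finite_strict_total_order_feasible_P2)
  let ?pos = "decoding_position K alpha"
  let ?ord = "inv_into {1..K} ?pos"
  have pos_rank: "?pos k = rank k" if "k \<in> {1..K}" for k
    using sum_zero_one_eq_card[of "{1..K}" "alpha k"] feasible_P2_alpha_zero_one[OF feas that]
    unfolding decoding_position_def rank_def above_def by simp
  show bij_pos: "bij_betw ?pos {1..K} {1..K}"
    using bij_betw_rank bij_betw_cong[of "{1..K}" ?pos rank] pos_rank by simp
  have bij_ord: "bij_betw ?ord {1..K} {1..K}"
    using bij_pos by (rule bij_betw_inv_into)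
  have rank_ord: "rank (?ord m) = m" if "m \<in> {1..K}" for m
    using pos_rank[OF bij_betw_apply[OF bij_ord that]] bij_betw_inv_into_right[OF bij_pos that] by simp
  have "alpha (?ord m) (?ord n) = 1 \<longleftrightarrow> m < n" if "m \<in> {1..K}" and "n \<in> {1..K}" for m n
    using rank_less_iff[OF bij_betw_apply[OF bij_ord] bij_betw_apply[OF bij_ord]] rank_ord that
    by metis
  then show "feasible_P1 K H rho0 sigma2 rstar Pc E Pt w zeta q p ?ord"
    using feas bij_ord by (rule feasible_P1_if_feasible_P2[rotated 2])
qed

lemma feasible_P1_cong:
  assumes "\<And>m. m \<in> {1..K} \<Longrightarrow> p' (ord m) = p (ord m)"
  shows "feasible_P1 K H rho0 sigma2 rstar Pc E Pt w zeta q p' ord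
    \<longleftrightarrow> feasible_P1 K H rho0 sigma2 rstar Pc E Pt w zeta q p ord"
proof -
  have "(\<Sum>n\<in>{m+1..K}. p' (ord n) * gain rho0 H w q (ord n))
      = (\<Sum>n\<in>{m+1..K}. p (ord n) * gain rho0 H w q (ord n))" for m
    using assms by (intro sum.cong) auto
  then show ?thesis
    unfolding feasible_P1_def by (intro conj_cong ball_cong) (simp_all add: assms)
qed

lemma feasible_P1_iff_energy:
  assumes "feasible_P1 K H rho0 sigma2 rstar Pc E Pt w zeta q p ord"
  shows "feasible_P1 K H rho0 sigma2 rstar Pc E Pt w z q p ord \<longleftrightarrow> (\<forall>k\<in>{1..K}. p k + Pc \<le> z * E k)"
proof -
  have "ord ` {1..K} = {1..K}"
    using assms unfolding feasible_P1_def by (intro bij_betw_imp_surj_on) (rule conjunct1)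
  moreover have "(\<forall>m\<in>{1..K}. P (ord m)) \<longleftrightarrow> (\<forall>k\<in>ord ` {1..K}. P k)" for P
    by simp
  ultimately have "(\<forall>m\<in>{1..K}. P (ord m)) \<longleftrightarrow> (\<forall>k\<in>{1..K}. P k)" for P
    by simp
  then show ?thesis
    using assms unfolding feasible_P1_def ball_conj_distrib by simp
qed

lemma feasible_P2_iff_energy:
  assumes "feasible_P2 K H rho0 sigma2 rstar Pc E Pt w zeta q p alpha"
  shows "feasible_P2 K H rho0 sigma2 rstar Pc E Pt w z q p alpha \<longleftrightarrow> (\<forall>k\<in>{1..K}. p k + Pc \<le> z * E k)"
  using assms unfolding feasible_P2_def ball_conj_distrib by simp

theorem proposition2:
  fixes K :: nat and H rho0 sigma2 rstar Pc zeta :: real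
    and E Pt p :: "nat \<Rightarrow> real" and w :: "nat \<Rightarrow> real^2" and q :: "real^2"
    and alpha :: "nat \<Rightarrow> nat \<Rightarrow> int"
  assumes "K \<ge> 1" and "H > 0" and "rho0 > 0" and "sigma2 > 0" and "rstar > 0" and "Pc \<ge> 0"
    and "\<forall>k\<in>{1..K}. E k > 0" and "\<forall>k\<in>{1..K}. Pt k > 0"
    and feas: "feasible_P2 K H rho0 sigma2 rstar Pc E Pt w zeta q p alpha"
  defines "f \<equiv> (\<lambda>k. nat (int K - (\<Sum>j\<in>{1..K}. alpha k j)))"
  defines "ord' \<equiv> inv_into {1..K} f"
  shows "bij_betw f {1..K} {1..K} \<and>
    (\<forall>p'. (\<forall>m\<in>{1..K}. p' (ord' m) = p (inv_into {1..K} f m)) \<longrightarrow>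
       feasible_P1 K H rho0 sigma2 rstar Pc E Pt w zeta q p' ord' \<and>
       least_elem {z. feasible_P1 K H rho0 sigma2 rstar Pc E Pt w z q p' ord'}
               (Max ((\<lambda>k. (p k + Pc) / E k) ` {1..K})) \<and>
       least_elem {z. feasible_P2 K H rho0 sigma2 rstar Pc E Pt w z q p alpha}
               (Max ((\<lambda>k. (p k + Pc) / E k) ` {1..K})))"
proof -
  have "f = decoding_position K alpha"
    unfolding f_def by (simp add: fun_eq_iff decoding_position_def)
  then have bij_f: "bij_betw f {1..K} {1..K}"
    and feas1: "feasible_P1 K H rho0 sigma2 rstar Pc E Pt w zeta q p ord'"
    unfolding ord'_def using bij_betw_decoding_position[OF feas] feasible_P1_decoding_order[OF feas]
    by simp_all
  let ?P1 = "feasible_P1 K H rho0 sigma2 rstar Pc E Pt w"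
    and ?P2 = "feasible_P2 K H rho0 sigma2 rstar Pc E Pt w"
  have least: "least_elem {z. \<forall>k\<in>{1..K}. p k + Pc \<le> z * E k} (Max ((\<lambda>k. (p k + Pc) / E k) ` {1..K}))"
    using assms(1,7) by (intro least_elem_Max_ratio) auto
  show ?thesis
    unfolding ord'_def[symmetric]
  proof (intro conjI allI impI bij_f)
    fix p' assume "\<forall>m\<in>{1..K}. p' (ord' m) = p (ord' m)"
    then have P1_p': "?P1 z q p' ord' \<longleftrightarrow> ?P1 z q p ord'" for z
      by (intro feasible_P1_cong) auto
    show "?P1 zeta q p' ord'"
      using feas1 P1_p' by simp
    show "least_elem {z. ?P1 z q p' ord'} (Max ((\<lambda>k. (p k + Pc) / E k) ` {1..K}))"
      using least by (simp add: P1_p' feasible_P1_iff_energy[OF feas1])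
    show "least_elem {z. ?P2 z q p alpha} (Max ((\<lambda>k. (p k + Pc) / E k) ` {1..K}))"
      using least by (simp add: feasible_P2_iff_energy[OF feas])
  qed
qed

end
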